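(* Fix a $C^0$-concept over a topologized field $\mathbb{K}$. Let $E,F\in\mathcal{M}$, $U\subseteq E$ open, $f\in C^0(U,F)$, and suppose there exists a $C^0$-map $g\colon P\to F$ defined on an open neighbourhood $P$ of $U\times E\times\{0\}$ in $U^{[1]}$ such that $g(x,y,t)=\frac{f(x+ty)-f(x)}{t}$ for all $(x,y,t)\in P$ with $t\ne0$. Then $f$ is of class $C^1$ and $g=f^{[1]}|_P$.
   Context: Let $\mathbb{K}$ be a commutative ring with unit (here a field) carrying a topology. A $C^0$-concept over $\mathbb{K}$ consists of: (a) a class $\mathcal{M}$ of topologized $\mathbb{K}$-modules with $\mathbb{K}\in\mathcal{M}$; (b) for $E,F\in\mathcal{M}$ and open $U\subseteq E$, a set $C^0(U,F)$ of continuous maps; (c) for $E_1,E_2\in\mathcal{M}$ a topology on $E_1\times E_2$ (not necessarily the product topology) making it a member of $\mathcal{M}$; subject to: (I.1) composites of $C^0$-maps are $C^0$, identities and inclusions of open subsets are $C^0$; (I.2) $x\mapsto rx+b$ is $C^0$; (I.3) $t\mapsto tv+x$ is $C^0$; (I.4) $\mathbb{K}^\times$ is open and inversion is $C^0$; (I.5) a map which is $C^0$ on each member of an open cover of its domain is $C^0$; (II.1) projections and $v\mapsto(v,y)$, $w\mapsto(x,w)$ are $C^0$; (II.2) $f_1\times f_2$ is $C^0$ for $C^0$-maps $f_i$; (II.3) diagonals are $C^0$; (II.4) exchange/associativity maps of products are $C^0$ both ways; (II.5) addition and scalar multiplication are $C^0$; (III) a $C^0$-map on open $U\subseteq\mathbb{K}$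 is determined by its values on $U\cap\mathbb{K}^\times$. $U^{[1]}:=\{(x,v,t)\in U\times E\times\mathbb{K}:x+tv\in U\}$, open in $E\times E\times\mathbb{K}$. A $C^0$-map $f$ is $C^1$ if there is a $C^0$-map $f^{[1]}\colon U^{[1]}\to F$ with $f(x+tv)-f(x)=t\,f^{[1]}(x,v,t)$ for all $(x,v,t)\in U^{[1]}$. *)

theory Defs
  imports "HOL-Analysis.Analysis"
begin

text \<open>
  Since HOL cannot quantify over a class of types,
  all members of the class M live as subsets (carriers) of one universe type 'u.
  The ground field K is a type 'k of class field carrying a topology KT; it is
  represented inside the universe by an injective map emb.  Products E1 x E2
  are represented by an injective pairing function on the universe; the
  product object prd E1 E2 has the componentwise module structure but an
  arbitrary topology.  Maps are total HOL functions, regarded on their domain only.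
\<close>

record ('k, 'u) tmod =
  carr :: "'u set"
  zer :: 'u
  ad :: "'u \<Rightarrow> 'u \<Rightarrow> 'u"
  sm :: "'k \<Rightarrow> 'u \<Rightarrow> 'u"
  tp :: "'u topology"

definition is_tmodule :: "('k::field, 'u) tmod \<Rightarrow> bool" where
  "is_tmodule E \<longleftrightarrow>
     zer E \<in> carr E \<and>
     (\<forall>x\<in>carr E. \<forall>y\<in>carr E. ad E x y \<in> carr E) \<and>
     (\<forall>r. \<forall>x\<in>carr E. sm E r x \<in> carr E) \<and>
     (\<forall>x\<in>carr E. \<forall>y\<in>carr E. \<forall>z\<in>carr E. ad E (ad E x y) z = ad E x (ad E y z)) \<and>
     (\<forall>x\<in>carr E. \<forall>y\<in>carr E. ad E x y = ad E y x) \<and>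
     (\<forall>x\<in>carr E. ad E x (zer E) = x) \<and>
     (\<forall>x\<in>carr E. \<exists>y\<in>carr E. ad E x y = zer E) \<and>
     (\<forall>r. \<forall>x\<in>carr E. \<forall>y\<in>carr E. sm E r (ad E x y) = ad E (sm E r x) (sm E r y)) \<and>
     (\<forall>r s. \<forall>x\<in>carr E. sm E (r + s) x = ad E (sm E r x) (sm E s x)) \<and>
     (\<forall>r s. \<forall>x\<in>carr E. sm E (r * s) x = sm E r (sm E s x)) \<and>
     (\<forall>x\<in>carr E. sm E 1 x = x) \<and>
     topspace (tp E) = carr E"

definition msub :: "('k::field, 'u) tmod \<Rightarrow> 'u \<Rightarrow> 'u \<Rightarrow> 'u" where
  "msub E x y = ad E x (sm E (-1) y)"

record ('k, 'u) concept =
  KT :: "'k topology"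
  emb :: "'k \<Rightarrow> 'u"
  pairing :: "'u \<Rightarrow> 'u \<Rightarrow> 'u"
  Mcls :: "('k, 'u) tmod set"
  C0s :: "('k, 'u) tmod \<Rightarrow> 'u set \<Rightarrow> ('k, 'u) tmod \<Rightarrow> ('u \<Rightarrow> 'u) set"
  prd :: "('k, 'u) tmod \<Rightarrow> ('k, 'u) tmod \<Rightarrow> ('k, 'u) tmod"

definition kv :: "('k, 'u) concept \<Rightarrow> 'u \<Rightarrow> 'k" where
  "kv C u = inv (emb C) u"

definition Kobj :: "('k::field, 'u) concept \<Rightarrow> ('k, 'u) tmod" where
  "Kobj C = \<lparr> carr = range (emb C), zer = emb C 0,
      ad = (\<lambda>a b. emb C (kv C a + kv C b)),
      sm = (\<lambda>r a. emb C (r * kv C a)),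
      tp = topology (\<lambda>S. S \<subseteq> range (emb C) \<and> openin (KT C) (emb C -` S)) \<rparr>"

definition pfst :: "('k, 'u) concept \<Rightarrow> 'u \<Rightarrow> 'u" where
  "pfst C p = fst (inv (case_prod (pairing C)) p)"

definition psnd :: "('k, 'u) concept \<Rightarrow> 'u \<Rightarrow> 'u" where
  "psnd C p = snd (inv (case_prod (pairing C)) p)"

definition concept_struct :: "('k::field, 'u) concept \<Rightarrow> bool" where
  "concept_struct C \<longleftrightarrow>
     topspace (KT C) = UNIV \<and> inj (emb C) \<and> inj (case_prod (pairing C)) \<and>
     Kobj C \<in> Mcls C \<and> (\<forall>E\<in>Mcls C. is_tmodule E) \<and>
     (\<forall>E1\<in>Mcls C. \<forall>E2\<in>Mcls C.
        prd C E1 E2 \<in> Mcls C \<and>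
        carr (prd C E1 E2) = {pairing C a b | a b. a \<in> carr E1 \<and> b \<in> carr E2} \<and>
        zer (prd C E1 E2) = pairing C (zer E1) (zer E2) \<and>
        (\<forall>a1\<in>carr E1. \<forall>a2\<in>carr E1. \<forall>b1\<in>carr E2. \<forall>b2\<in>carr E2.
           ad (prd C E1 E2) (pairing C a1 b1) (pairing C a2 b2)
             = pairing C (ad E1 a1 a2) (ad E2 b1 b2)) \<and>
        (\<forall>r. \<forall>a\<in>carr E1. \<forall>b\<in>carr E2.
           sm (prd C E1 E2) r (pairing C a b) = pairing C (sm E1 r a) (sm E2 r b))) \<and>
     (\<forall>E\<in>Mcls C. \<forall>F\<in>Mcls C. \<forall>U f. f \<in> C0s C E U F \<longrightarrow>
        openin (tp E) U \<and> f ` U \<subseteq> carr F \<and>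
        continuous_map (subtopology (tp E) U) (tp F) f) \<and>
     (\<forall>E\<in>Mcls C. \<forall>F\<in>Mcls C. \<forall>U f g. f \<in> C0s C E U F \<longrightarrow> (\<forall>x\<in>U. g x = f x)
        \<longrightarrow> g \<in> C0s C E U F)"

definition concept_I :: "('k::field, 'u) concept \<Rightarrow> bool" where
  "concept_I C \<longleftrightarrow>
     \<comment> \<open>(I.1)\<close>
     (\<forall>E\<in>Mcls C. \<forall>F\<in>Mcls C. \<forall>G\<in>Mcls C. \<forall>U V f g.
        f \<in> C0s C E U F \<longrightarrow> g \<in> C0s C F V G \<longrightarrow> f ` U \<subseteq> V \<longrightarrow> g \<circ> f \<in> C0s C E U G) \<and>
     (\<forall>E\<in>Mcls C. \<forall>V. openin (tp E) V \<longrightarrow> id \<in> C0s C E V E) \<and>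
     \<comment> \<open>(I.2)\<close>
     (\<forall>E\<in>Mcls C. \<forall>r. \<forall>b\<in>carr E. (\<lambda>x. ad E (sm E r x) b) \<in> C0s C E (carr E) E) \<and>
     \<comment> \<open>(I.3)\<close>
     (\<forall>E\<in>Mcls C. \<forall>v\<in>carr E. \<forall>x\<in>carr E.
        (\<lambda>s. ad E (sm E (kv C s) v) x) \<in> C0s C (Kobj C) (carr (Kobj C)) E) \<and>
     \<comment> \<open>(I.4)\<close>
     openin (tp (Kobj C)) (emb C ` (- {0})) \<and>
     (\<lambda>s. emb C (inverse (kv C s))) \<in> C0s C (Kobj C) (emb C ` (- {0})) (Kobj C) \<and>
     \<comment> \<open>(I.5)\<close>
     (\<forall>E\<in>Mcls C. \<forall>F\<in>Mcls C. \<forall>U f \<V>. openin (tp E) U \<longrightarrow> (\<forall>V\<in>\<V>. openin (tp E) V) \<longrightarrow>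
        \<Union>\<V> = U \<longrightarrow> (\<forall>V\<in>\<V>. f \<in> C0s C E V F) \<longrightarrow> f \<in> C0s C E U F)"

definition concept_II :: "('k::field, 'u) concept \<Rightarrow> bool" where
  "concept_II C \<longleftrightarrow>
     \<comment> \<open>(II.1)\<close>
     (\<forall>E1\<in>Mcls C. \<forall>E2\<in>Mcls C.
        pfst C \<in> C0s C (prd C E1 E2) (carr (prd C E1 E2)) E1 \<and>
        psnd C \<in> C0s C (prd C E1 E2) (carr (prd C E1 E2)) E2 \<and>
        (\<forall>y\<in>carr E2. (\<lambda>v. pairing C v y) \<in> C0s C E1 (carr E1) (prd C E1 E2)) \<and>
        (\<forall>x\<in>carr E1. (\<lambda>w. pairing C x w) \<in> C0s C E2 (carr E2) (prd C E1 E2))) \<and>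
     \<comment> \<open>(II.2)\<close>
     (\<forall>E1\<in>Mcls C. \<forall>E2\<in>Mcls C. \<forall>F1\<in>Mcls C. \<forall>F2\<in>Mcls C. \<forall>U1 U2 f1 f2.
        f1 \<in> C0s C E1 U1 F1 \<longrightarrow> f2 \<in> C0s C E2 U2 F2 \<longrightarrow>
        (\<lambda>p. pairing C (f1 (pfst C p)) (f2 (psnd C p)))
          \<in> C0s C (prd C E1 E2) {pairing C a b | a b. a \<in> U1 \<and> b \<in> U2} (prd C F1 F2)) \<and>
     \<comment> \<open>(II.3)\<close>
     (\<forall>E\<in>Mcls C. (\<lambda>x. pairing C x x) \<in> C0s C E (carr E) (prd C E E)) \<and>
     \<comment> \<open>(II.4)\<close>
     (\<forall>E1\<in>Mcls C. \<forall>E2\<in>Mcls C.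
        (\<lambda>p. pairing C (psnd C p) (pfst C p)) \<in> C0s C (prd C E1 E2) (carr (prd C E1 E2)) (prd C E2 E1)) \<and>
     (\<forall>E1\<in>Mcls C. \<forall>E2\<in>Mcls C. \<forall>E3\<in>Mcls C.
        (\<lambda>p. pairing C (pfst C (pfst C p)) (pairing C (psnd C (pfst C p)) (psnd C p)))
          \<in> C0s C (prd C (prd C E1 E2) E3) (carr (prd C (prd C E1 E2) E3)) (prd C E1 (prd C E2 E3)) \<and>
        (\<lambda>p. pairing C (pairing C (pfst C p) (pfst C (psnd C p))) (psnd C (psnd C p)))
          \<in> C0s C (prd C E1 (prd C E2 E3)) (carr (prd C E1 (prd C E2 E3))) (prd C (prd C E1 E2) E3)) \<and>
     \<comment> \<open>(II.5)\<close>
     (\<forall>E\<in>Mcls C.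
        (\<lambda>p. ad E (pfst C p) (psnd C p)) \<in> C0s C (prd C E E) (carr (prd C E E)) E \<and>
        (\<lambda>p. sm E (kv C (pfst C p)) (psnd C p))
          \<in> C0s C (prd C (Kobj C) E) (carr (prd C (Kobj C) E)) E)"

definition concept_III :: "('k::field, 'u) concept \<Rightarrow> bool" where
  "concept_III C \<longleftrightarrow>
     (\<forall>F\<in>Mcls C. \<forall>U f g. openin (tp (Kobj C)) U \<longrightarrow>
        f \<in> C0s C (Kobj C) U F \<longrightarrow> g \<in> C0s C (Kobj C) U F \<longrightarrow>
        (\<forall>s\<in>U. kv C s \<noteq> 0 \<longrightarrow> f s = g s) \<longrightarrow> (\<forall>s\<in>U. f s = g s))"

definition C0_concept :: "('k::field, 'u) concept \<Rightarrow> bool" where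
  "C0_concept C \<longleftrightarrow> concept_struct C \<and> concept_I C \<and> concept_II C \<and> concept_III C"

definition EEK :: "('k::field, 'u) concept \<Rightarrow> ('k, 'u) tmod \<Rightarrow> ('k, 'u) tmod" where
  "EEK C E = prd C E (prd C E (Kobj C))"

definition U1 :: "('k::field, 'u) concept \<Rightarrow> ('k, 'u) tmod \<Rightarrow> 'u set \<Rightarrow> 'u set" where
  "U1 C E U = {pairing C x (pairing C v (emb C t)) | x v t.
                 x \<in> U \<and> v \<in> carr E \<and> ad E x (sm E t v) \<in> U}"

definition diffquot_map ::
  "('k::field, 'u) concept \<Rightarrow> ('k, 'u) tmod \<Rightarrow> 'u set \<Rightarrow> ('k, 'u) tmod
     \<Rightarrow> ('u \<Rightarrow> 'u) \<Rightarrow> ('u \<Rightarrow> 'u) \<Rightarrow> bool" where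
  "diffquot_map C E U F f h \<longleftrightarrow>
     h \<in> C0s C (EEK C E) (U1 C E U) F \<and>
     (\<forall>x v t. x \<in> U \<longrightarrow> v \<in> carr E \<longrightarrow> ad E x (sm E t v) \<in> U \<longrightarrow>
        msub F (f (ad E x (sm E t v))) (f x) = sm F t (h (pairing C x (pairing C v (emb C t)))))"

definition C1 :: "('k::field, 'u) concept \<Rightarrow> ('k, 'u) tmod \<Rightarrow> 'u set \<Rightarrow> ('k, 'u) tmod
     \<Rightarrow> ('u \<Rightarrow> 'u) \<Rightarrow> bool" where
  "C1 C E U F f \<longleftrightarrow> f \<in> C0s C E U F \<and> (\<exists>h. diffquot_map C E U F f h)"

end

theory Submission
  imports Defs
begin

text \<open>
  On U^[1], glue g (on P) with the difference quotient (f(x + tv) - f(x))/t on the open part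
  where t \<noteq> 0.  The two pieces cover U^[1] because P contains the slice t = 0, they agree on
  the overlap by hypothesis, and each is C^0, so by (I.5) the glued map is C^0 and is an f^[1].
  For uniqueness, restrict any f^[1] and g to a line s \<mapsto> (x, v, s): this gives two C^0-maps
  on an open subset of K that agree where s \<noteq> 0, hence everywhere by (III).
\<close>

lemma tmodule_topspace: "is_tmodule E \<Longrightarrow> topspace (tp E) = carr E"
  and tmodule_zer_in: "is_tmodule E \<Longrightarrow> zer E \<in> carr E"
  and tmodule_ad_in: "is_tmodule E \<Longrightarrow> x \<in> carr E \<Longrightarrow> y \<in> carr E \<Longrightarrow> ad E x y \<in> carr E"
  and tmodule_sm_in: "is_tmodule E \<Longrightarrow> x \<in> carr E \<Longrightarrow> sm E r x \<in> carr E"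
  and tmodule_ad_zer: "is_tmodule E \<Longrightarrow> x \<in> carr E \<Longrightarrow> ad E x (zer E) = x"
  and tmodule_sm_sm: "is_tmodule E \<Longrightarrow> x \<in> carr E \<Longrightarrow> sm E r (sm E s x) = sm E (r * s) x"
  and tmodule_sm_one: "is_tmodule E \<Longrightarrow> x \<in> carr E \<Longrightarrow> sm E 1 x = x"
  and tmodule_sm_add: "is_tmodule E \<Longrightarrow> x \<in> carr E \<Longrightarrow> sm E (r + s) x = ad E (sm E r x) (sm E s x)"
  by (simp_all add: is_tmodule_def)

lemma tmodule_ad_assoc: "is_tmodule E \<Longrightarrow> x \<in> carr E \<Longrightarrow> y \<in> carr E \<Longrightarrow> z \<in> carr E \<Longrightarrow>
     ad E (ad E x y) z = ad E x (ad E y z)"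
  unfolding is_tmodule_def by (elim conjE) (rule bspec, rule bspec, rule bspec)

lemma tmodule_ad_inverse: "is_tmodule E \<Longrightarrow> x \<in> carr E \<Longrightarrow> \<exists>y\<in>carr E. ad E x y = zer E"
  unfolding is_tmodule_def by (elim conjE) blast

lemma tmodule_sm_zero:
  assumes E: "is_tmodule E" and x: "x \<in> carr E"
  shows "sm E 0 x = zer E"
proof -
  let ?a = "sm E 0 x"
  have a: "?a \<in> carr E" using tmodule_sm_in[OF E x] .
  have idem: "ad E ?a ?a = ?a" using tmodule_sm_add[OF E x, of 0 0] by simp
  obtain b where b: "b \<in> carr E" "ad E ?a b = zer E"
    using tmodule_ad_inverse[OF E a] by blast
  have "zer E = ad E (ad E ?a ?a) b" using idem b by simp
  also have "\<dots> = ad E ?a (zer E)" using tmodule_ad_assoc[OF E a a b(1)] b(2) by simp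
  also have "\<dots> = ?a" using tmodule_ad_zer[OF E a] .
  finally show ?thesis by simp
qed

lemma tmodule_msub_in: "is_tmodule E \<Longrightarrow> x \<in> carr E \<Longrightarrow> y \<in> carr E \<Longrightarrow> msub E x y \<in> carr E"
  by (simp add: msub_def tmodule_ad_in tmodule_sm_in)

lemma tmodule_msub_self:
  assumes E: "is_tmodule E" and x: "x \<in> carr E"
  shows "msub E x x = zer E"
proof -
  have "msub E x x = ad E (sm E 1 x) (sm E (-1) x)"
    by (simp add: msub_def tmodule_sm_one[OF E x])
  also have "\<dots> = sm E (1 + -1) x" by (rule tmodule_sm_add[OF E x, symmetric])
  finally show ?thesis by (simp add: tmodule_sm_zero[OF E x])
qed

lemma tmodule_sm_inverse_cancel:
  "is_tmodule E \<Longrightarrow> x \<in> carr E \<Longrightarrow> t \<noteq> 0 \<Longrightarrow> sm E (inverse t) (sm E t x) = x"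
  and tmodule_sm_cancel_inverse:
  "is_tmodule E \<Longrightarrow> x \<in> carr E \<Longrightarrow> t \<noteq> 0 \<Longrightarrow> sm E t (sm E (inverse t) x) = x"
  by (simp_all add: tmodule_sm_sm tmodule_sm_one)

lemma carr_Kobj: "carr (Kobj C) = range (emb C)"
  by (simp add: Kobj_def)

definition shift_map :: "('k::field, 'u) concept \<Rightarrow> ('k, 'u) tmod \<Rightarrow> 'u \<Rightarrow> 'u" where
  "shift_map C E p = ad E (pfst C p) (sm E (kv C (psnd C (psnd C p))) (pfst C (psnd C p)))"

text \<open>At t = 0 the value is junk (inverse 0 = 0); it is only ever used where t \<noteq> 0.\<close>
definition diff_quot ::
  "('k::field, 'u) concept \<Rightarrow> ('k, 'u) tmod \<Rightarrow> ('k, 'u) tmod \<Rightarrow> ('u \<Rightarrow> 'u) \<Rightarrow> 'u \<Rightarrow> 'u" where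
  "diff_quot C E F f p =
     sm F (inverse (kv C (psnd C (psnd C p)))) (msub F (f (shift_map C E p)) (f (pfst C p)))"

locale c0_concept =
  fixes C :: "('k::field, 'u) concept"
  assumes C0_concept: "C0_concept C"
begin

lemma concept_struct: "concept_struct C"
  and concept_I: "concept_I C"
  and concept_II: "concept_II C"
  and concept_III: "concept_III C"
  using C0_concept by (simp_all add: C0_concept_def)

lemma Kobj_in_Mcls: "Kobj C \<in> Mcls C"
  and inj_emb: "inj (emb C)"
  and inj_pairing: "inj (case_prod (pairing C))"
  using concept_struct by (simp_all add: concept_struct_def)

lemma Mcls_tmodule: "E \<in> Mcls C \<Longrightarrow> is_tmodule E"
  using concept_struct unfolding concept_struct_def by (elim conjE) simp

lemma prd_in_Mcls: "E1 \<in> Mcls C \<Longrightarrow> E2 \<in> Mcls C \<Longrightarrow> prd C E1 E2 \<in> Mcls C"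
  using concept_struct unfolding concept_struct_def by (elim conjE) simp

lemma carr_prd: "E1 \<in> Mcls C \<Longrightarrow> E2 \<in> Mcls C \<Longrightarrow>
    carr (prd C E1 E2) = {pairing C a b | a b. a \<in> carr E1 \<and> b \<in> carr E2}"
  using concept_struct unfolding concept_struct_def by (elim conjE) simp

lemma pfst_pairing [simp]: "pfst C (pairing C a b) = a"
  and psnd_pairing [simp]: "psnd C (pairing C a b) = b"
  unfolding pfst_def psnd_def using inv_f_f[OF inj_pairing, of "(a, b)"] by simp_all

lemma pairing_eq_iff [simp]: "pairing C a b = pairing C c d \<longleftrightarrow> a = c \<and> b = d"
  by (metis pfst_pairing psnd_pairing)

lemma kv_emb [simp]: "kv C (emb C t) = t"
  unfolding kv_def by (rule inv_f_f[OF inj_emb])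

lemma emb_eq_iff [simp]: "emb C s = emb C t \<longleftrightarrow> s = t"
  using inj_emb by (meson injD)

lemma C0_openin: "f \<in> C0s C E U F \<Longrightarrow> E \<in> Mcls C \<Longrightarrow> F \<in> Mcls C \<Longrightarrow> openin (tp E) U"
  using concept_struct unfolding concept_struct_def by (elim conjE) simp

lemma C0_image_subset: "f \<in> C0s C E U F \<Longrightarrow> E \<in> Mcls C \<Longrightarrow> F \<in> Mcls C \<Longrightarrow> f ` U \<subseteq> carr F"
  using concept_struct unfolding concept_struct_def by (elim conjE) simp

lemma C0_continuous_map: "f \<in> C0s C E U F \<Longrightarrow> E \<in> Mcls C \<Longrightarrow> F \<in> Mcls C \<Longrightarrow>
    continuous_map (subtopology (tp E) U) (tp F) f"
  using concept_struct unfolding concept_struct_def by (elim conjE) simp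

lemma C0_cong: "f \<in> C0s C E U F \<Longrightarrow> E \<in> Mcls C \<Longrightarrow> F \<in> Mcls C \<Longrightarrow>
    (\<And>x. x \<in> U \<Longrightarrow> g x = f x) \<Longrightarrow> g \<in> C0s C E U F"
  using concept_struct unfolding concept_struct_def by (elim conjE) simp

lemma C0_compose:
  "f \<in> C0s C E U F \<Longrightarrow> g \<in> C0s C F V G \<Longrightarrow> f ` U \<subseteq> V \<Longrightarrow>
    E \<in> Mcls C \<Longrightarrow> F \<in> Mcls C \<Longrightarrow> G \<in> Mcls C \<Longrightarrow> (\<lambda>x. g (f x)) \<in> C0s C E U G"
  using concept_I unfolding concept_I_def comp_def by (elim conjE) simp

lemma C0_ident: "E \<in> Mcls C \<Longrightarrow> openin (tp E) V \<Longrightarrow> (\<lambda>x. x) \<in> C0s C E V E"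
  using concept_I unfolding concept_I_def id_def by (elim conjE) simp

lemma C0_affine: "E \<in> Mcls C \<Longrightarrow> b \<in> carr E \<Longrightarrow> (\<lambda>x. ad E (sm E r x) b) \<in> C0s C E (carr E) E"
  using concept_I unfolding concept_I_def by (elim conjE) simp

lemma openin_nonzero: "openin (tp (Kobj C)) (emb C ` (- {0}))"
  and C0_inverse: "(\<lambda>s. emb C (inverse (kv C s))) \<in> C0s C (Kobj C) (emb C ` (- {0})) (Kobj C)"
  using concept_I unfolding concept_I_def by simp_all

lemma C0_glue:
  "E \<in> Mcls C \<Longrightarrow> F \<in> Mcls C \<Longrightarrow> openin (tp E) U \<Longrightarrow> \<forall>V\<in>\<V>. openin (tp E) V \<Longrightarrow>
    \<Union>\<V> = U \<Longrightarrow> \<forall>V\<in>\<V>. f \<in> C0s C E V F \<Longrightarrow> f \<in> C0s C E U F"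
  using concept_I unfolding concept_I_def by (elim conjE) simp

lemma C0_pfst: "E1 \<in> Mcls C \<Longrightarrow> E2 \<in> Mcls C \<Longrightarrow> pfst C \<in> C0s C (prd C E1 E2) (carr (prd C E1 E2)) E1"
  and C0_psnd: "E1 \<in> Mcls C \<Longrightarrow> E2 \<in> Mcls C \<Longrightarrow> psnd C \<in> C0s C (prd C E1 E2) (carr (prd C E1 E2)) E2"
  and C0_pairing_right: "E1 \<in> Mcls C \<Longrightarrow> E2 \<in> Mcls C \<Longrightarrow> x \<in> carr E1 \<Longrightarrow>
    (\<lambda>w. pairing C x w) \<in> C0s C E2 (carr E2) (prd C E1 E2)"
  and C0_prod_map: "E1 \<in> Mcls C \<Longrightarrow> E2 \<in> Mcls C \<Longrightarrow> F1 \<in> Mcls C \<Longrightarrow> F2 \<in> Mcls C \<Longrightarrow>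
    f1 \<in> C0s C E1 V1 F1 \<Longrightarrow> f2 \<in> C0s C E2 V2 F2 \<Longrightarrow>
    (\<lambda>p. pairing C (f1 (pfst C p)) (f2 (psnd C p)))
      \<in> C0s C (prd C E1 E2) {pairing C a b | a b. a \<in> V1 \<and> b \<in> V2} (prd C F1 F2)"
  and C0_diagonal: "E \<in> Mcls C \<Longrightarrow> (\<lambda>x. pairing C x x) \<in> C0s C E (carr E) (prd C E E)"
  and C0_addition: "E \<in> Mcls C \<Longrightarrow>
    (\<lambda>p. ad E (pfst C p) (psnd C p)) \<in> C0s C (prd C E E) (carr (prd C E E)) E"
  and C0_scalar_mult: "E \<in> Mcls C \<Longrightarrow>
    (\<lambda>p. sm E (kv C (pfst C p)) (psnd C p)) \<in> C0s C (prd C (Kobj C) E) (carr (prd C (Kobj C) E)) E"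
  using concept_II unfolding concept_II_def by (elim conjE; simp)+

lemma C0_eq_if_eq_off_zero:
  "F \<in> Mcls C \<Longrightarrow> openin (tp (Kobj C)) V \<Longrightarrow> f \<in> C0s C (Kobj C) V F \<Longrightarrow> g \<in> C0s C (Kobj C) V F \<Longrightarrow>
    (\<And>s. s \<in> V \<Longrightarrow> kv C s \<noteq> 0 \<Longrightarrow> f s = g s) \<Longrightarrow> s \<in> V \<Longrightarrow> f s = g s"
  using concept_III unfolding concept_III_def by simp

lemma C0_subset_carr: "f \<in> C0s C E U F \<Longrightarrow> E \<in> Mcls C \<Longrightarrow> F \<in> Mcls C \<Longrightarrow> U \<subseteq> carr E"
  using C0_openin openin_subset tmodule_topspace Mcls_tmodule by metis

lemma C0_in_carr: "f \<in> C0s C E U F \<Longrightarrow> E \<in> Mcls C \<Longrightarrow> F \<in> Mcls C \<Longrightarrow> x \<in> U \<Longrightarrow> f x \<in> carr F"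
  using C0_image_subset by blast

lemma C0_restrict:
  assumes "f \<in> C0s C E U F" "E \<in> Mcls C" "F \<in> Mcls C" "openin (tp E) V" "V \<subseteq> U"
  shows "f \<in> C0s C E V F"
  using C0_compose[OF C0_ident[OF assms(2,4)] assms(1)] assms by auto

lemma C0_Un:
  assumes "E \<in> Mcls C" "F \<in> Mcls C" "f \<in> C0s C E V F" "f \<in> C0s C E W F"
  shows "f \<in> C0s C E (V \<union> W) F"
  by (rule C0_glue[of E F _ "{V, W}"]) (use assms C0_openin in auto)

lemma C0_openin_preimage:
  assumes f: "f \<in> C0s C E U F" and M: "E \<in> Mcls C" "F \<in> Mcls C" and S: "openin (tp F) S"
  shows "openin (tp E) {x \<in> U. f x \<in> S}"
proof -
  have U: "openin (tp E) U" using C0_openin[OF f M] .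
  have "openin (subtopology (tp E) U) {x \<in> topspace (subtopology (tp E) U). f x \<in> S}"
    using C0_continuous_map[OF f M] S by (rule openin_continuous_map_preimage)
  moreover have "topspace (subtopology (tp E) U) = U" using openin_subset[OF U] by auto
  ultimately show ?thesis using openin_trans_full U by fastforce
qed

lemma C0_pairing:
  assumes a: "a \<in> C0s C D U F1" and b: "b \<in> C0s C D U F2"
    and M: "D \<in> Mcls C" "F1 \<in> Mcls C" "F2 \<in> Mcls C"
  shows "(\<lambda>x. pairing C (a x) (b x)) \<in> C0s C D U (prd C F1 F2)"
proof -
  have diag: "(\<lambda>x. pairing C x x) \<in> C0s C D U (prd C D D)"
    using C0_restrict[OF C0_diagonal[OF M(1)] M(1) prd_in_Mcls[OF M(1) M(1)]]
      C0_openin[OF a] C0_subset_carr[OF a] M by blast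
  have "(\<lambda>x. (\<lambda>p. pairing C (a (pfst C p)) (b (psnd C p))) (pairing C x x)) \<in> C0s C D U (prd C F1 F2)"
    by (rule C0_compose[OF diag C0_prod_map[OF M(1) M(1) M(2) M(3) a b]]) (auto simp: M prd_in_Mcls)
  then show ?thesis by simp
qed

lemma C0_add:
  assumes a: "a \<in> C0s C D U E" and b: "b \<in> C0s C D U E" and M: "D \<in> Mcls C" "E \<in> Mcls C"
  shows "(\<lambda>x. ad E (a x) (b x)) \<in> C0s C D U E"
  using C0_compose[OF C0_pairing[OF a b M(1) M(2) M(2)] C0_addition[OF M(2)]]
  by (auto simp: M prd_in_Mcls carr_prd intro: C0_in_carr[OF a M] C0_in_carr[OF b M])

lemma C0_scale:
  assumes a: "a \<in> C0s C D U (Kobj C)" and b: "b \<in> C0s C D U E" and M: "D \<in> Mcls C" "E \<in> Mcls C"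
  shows "(\<lambda>x. sm E (kv C (a x)) (b x)) \<in> C0s C D U E"
  using C0_compose[OF C0_pairing[OF a b M(1) Kobj_in_Mcls M(2)] C0_scalar_mult[OF M(2)]]
  by (auto simp: M prd_in_Mcls carr_prd Kobj_in_Mcls
      intro: C0_in_carr[OF a M(1) Kobj_in_Mcls] C0_in_carr[OF b M])

lemma C0_msub:
  assumes a: "a \<in> C0s C D U E" and b: "b \<in> C0s C D U E" and M: "D \<in> Mcls C" "E \<in> Mcls C"
  shows "(\<lambda>x. msub E (a x) (b x)) \<in> C0s C D U E"
proof -
  have E: "is_tmodule E" using Mcls_tmodule[OF M(2)] .
  have "(\<lambda>x. ad E (sm E (-1) (b x)) (zer E)) \<in> C0s C D U E"
    using C0_compose[OF b C0_affine[OF M(2) tmodule_zer_in[OF E]]] C0_image_subset[OF b] M by blast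
  then have "(\<lambda>x. sm E (-1) (b x)) \<in> C0s C D U E"
    by (rule C0_cong[OF _ M]) (simp add: tmodule_ad_zer[OF E] tmodule_sm_in[OF E] C0_in_carr[OF b M])
  then show ?thesis unfolding msub_def by (rule C0_add[OF a _ M])
qed

lemma C0_inverse_comp:
  "a \<in> C0s C D U (Kobj C) \<Longrightarrow> D \<in> Mcls C \<Longrightarrow> a ` U \<subseteq> emb C ` (- {0}) \<Longrightarrow>
    (\<lambda>x. emb C (inverse (kv C (a x)))) \<in> C0s C D U (Kobj C)"
  using C0_compose[OF _ C0_inverse] Kobj_in_Mcls by blast

lemma shift_map_pairing [simp]:
  "shift_map C E (pairing C x (pairing C v (emb C t))) = ad E x (sm E t v)"
  by (simp add: shift_map_def)

lemma diff_quot_pairing [simp]: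
  "diff_quot C E F f (pairing C x (pairing C v (emb C t)))
     = sm F (inverse t) (msub F (f (ad E x (sm E t v))) (f x))"
  by (simp add: diff_quot_def)

lemma EEK_in_Mcls: "E \<in> Mcls C \<Longrightarrow> EEK C E \<in> Mcls C"
  by (simp add: EEK_def prd_in_Mcls Kobj_in_Mcls)

lemma carr_EEK: "E \<in> Mcls C \<Longrightarrow>
    carr (EEK C E) = {pairing C x (pairing C v (emb C t)) | x v t. x \<in> carr E \<and> v \<in> carr E}"
  by (auto simp: EEK_def carr_prd prd_in_Mcls Kobj_in_Mcls carr_Kobj)

lemma C0_EEK_base: "E \<in> Mcls C \<Longrightarrow> pfst C \<in> C0s C (EEK C E) (carr (EEK C E)) E"
  unfolding EEK_def by (rule C0_pfst) (simp_all add: prd_in_Mcls Kobj_in_Mcls)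

lemma C0_EEK_dir: "E \<in> Mcls C \<Longrightarrow> (\<lambda>p. pfst C (psnd C p)) \<in> C0s C (EEK C E) (carr (EEK C E)) E"
  and C0_EEK_param:
    "E \<in> Mcls C \<Longrightarrow> (\<lambda>p. psnd C (psnd C p)) \<in> C0s C (EEK C E) (carr (EEK C E)) (Kobj C)"
proof -
  assume E: "E \<in> Mcls C"
  have EK: "prd C E (Kobj C) \<in> Mcls C" by (simp add: E prd_in_Mcls Kobj_in_Mcls)
  have snd: "psnd C \<in> C0s C (EEK C E) (carr (EEK C E)) (prd C E (Kobj C))"
    unfolding EEK_def by (rule C0_psnd[OF E EK])
  have psnd_carr: "psnd C ` carr (EEK C E) \<subseteq> carr (prd C E (Kobj C))"
    by (auto simp: carr_EEK E carr_prd Kobj_in_Mcls carr_Kobj)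
  show "(\<lambda>p. pfst C (psnd C p)) \<in> C0s C (EEK C E) (carr (EEK C E)) E"
    by (rule C0_compose[OF snd C0_pfst psnd_carr]) (simp_all add: E EK EEK_in_Mcls Kobj_in_Mcls)
  show "(\<lambda>p. psnd C (psnd C p)) \<in> C0s C (EEK C E) (carr (EEK C E)) (Kobj C)"
    by (rule C0_compose[OF snd C0_psnd psnd_carr]) (simp_all add: E EK EEK_in_Mcls Kobj_in_Mcls)
qed

lemma C0_shift_map: "E \<in> Mcls C \<Longrightarrow> shift_map C E \<in> C0s C (EEK C E) (carr (EEK C E)) E"
  unfolding shift_map_def
  by (intro C0_add C0_scale C0_EEK_base C0_EEK_dir C0_EEK_param EEK_in_Mcls)

lemma U1_eq: "E \<in> Mcls C \<Longrightarrow> U \<subseteq> carr E \<Longrightarrow>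
    U1 C E U = {p \<in> carr (EEK C E). pfst C p \<in> U \<and> shift_map C E p \<in> U}"
  unfolding U1_def by (auto simp: carr_EEK)

lemma openin_U1:
  assumes E: "E \<in> Mcls C" and U: "openin (tp E) U"
  shows "openin (tp (EEK C E)) (U1 C E U)"
proof -
  let ?B = "{p \<in> carr (EEK C E). pfst C p \<in> U}"
  have EEK: "EEK C E \<in> Mcls C" by (rule EEK_in_Mcls[OF E])
  have B: "openin (tp (EEK C E)) ?B" by (rule C0_openin_preimage[OF C0_EEK_base[OF E] EEK E U])
  have "openin (tp (EEK C E)) {p \<in> ?B. shift_map C E p \<in> U}"
    by (rule C0_openin_preimage[OF C0_restrict[OF C0_shift_map[OF E] EEK E B] EEK E U]) auto
  moreover have "U \<subseteq> carr E" using openin_subset[OF U] tmodule_topspace[OF Mcls_tmodule[OF E]] by simp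
  ultimately show ?thesis by (simp add: U1_eq[OF E] conj_assoc)
qed

lemma U1_subset_carr: "E \<in> Mcls C \<Longrightarrow> openin (tp E) U \<Longrightarrow> U1 C E U \<subseteq> carr (EEK C E)"
  using openin_subset[OF openin_U1] by (simp add: tmodule_topspace Mcls_tmodule EEK_in_Mcls)

lemma openin_U1_nonzero:
  assumes E: "E \<in> Mcls C" and U: "openin (tp E) U"
  shows "openin (tp (EEK C E)) {p \<in> U1 C E U. psnd C (psnd C p) \<noteq> emb C 0}"
proof -
  have "openin (tp (EEK C E)) {p \<in> U1 C E U. psnd C (psnd C p) \<in> emb C ` (- {0})}"
    by (rule C0_openin_preimage[OF C0_restrict[OF C0_EEK_param[OF E] EEK_in_Mcls[OF E] Kobj_in_Mcls
          openin_U1[OF E U] U1_subset_carr[OF E U]] EEK_in_Mcls[OF E] Kobj_in_Mcls openin_nonzero])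
  moreover have "{p \<in> U1 C E U. psnd C (psnd C p) \<in> emb C ` (- {0})}
      = {p \<in> U1 C E U. psnd C (psnd C p) \<noteq> emb C 0}"
    by (auto simp: U1_def)
  ultimately show ?thesis by simp
qed

lemma C0_diff_quot:
  assumes E: "E \<in> Mcls C" and F: "F \<in> Mcls C" and U: "openin (tp E) U" and f: "f \<in> C0s C E U F"
  shows "diff_quot C E F f \<in> C0s C (EEK C E) {p \<in> U1 C E U. psnd C (psnd C p) \<noteq> emb C 0} F"
proof -
  let ?N = "{p \<in> U1 C E U. psnd C (psnd C p) \<noteq> emb C 0}"
  have EEK: "EEK C E \<in> Mcls C" by (rule EEK_in_Mcls[OF E])
  have N: "openin (tp (EEK C E)) ?N" by (rule openin_U1_nonzero[OF E U])
  have N_carr: "?N \<subseteq> carr (EEK C E)" using U1_subset_carr[OF E U] by blast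
  have restrict: "h \<in> C0s C (EEK C E) ?N G"
    if "h \<in> C0s C (EEK C E) (carr (EEK C E)) G" "G \<in> Mcls C" for h G
    by (rule C0_restrict[OF that(1) EEK that(2) N N_carr])
  have "(\<lambda>p. f (pfst C p)) \<in> C0s C (EEK C E) ?N F"
    by (rule C0_compose[OF restrict[OF C0_EEK_base[OF E] E] f]) (auto simp: U1_def E F EEK)
  moreover have "(\<lambda>p. f (shift_map C E p)) \<in> C0s C (EEK C E) ?N F"
    by (rule C0_compose[OF restrict[OF C0_shift_map[OF E] E] f]) (auto simp: U1_def E F EEK)
  moreover have "(\<lambda>p. emb C (inverse (kv C (psnd C (psnd C p))))) \<in> C0s C (EEK C E) ?N (Kobj C)"
    by (rule C0_inverse_comp[OF restrict[OF C0_EEK_param[OF E] Kobj_in_Mcls] EEK]) (auto simp: U1_def)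
  ultimately have "(\<lambda>p. sm F (kv C (emb C (inverse (kv C (psnd C (psnd C p))))))
      (msub F (f (shift_map C E p)) (f (pfst C p)))) \<in> C0s C (EEK C E) ?N F"
    by (intro C0_scale C0_msub EEK F)
  then show ?thesis by (simp add: diff_quot_def[abs_def])
qed

lemma C0_EEK_eq_if_eq_off_zero:
  assumes E: "E \<in> Mcls C" and F: "F \<in> Mcls C"
    and h: "h \<in> C0s C (EEK C E) P F" and g: "g \<in> C0s C (EEK C E) P F"
    and eq: "\<And>x v t. pairing C x (pairing C v (emb C t)) \<in> P \<Longrightarrow> t \<noteq> 0 \<Longrightarrow>
      h (pairing C x (pairing C v (emb C t))) = g (pairing C x (pairing C v (emb C t)))"
    and p: "p \<in> P"
  shows "h p = g p"
proof -
  have EEK: "EEK C E \<in> Mcls C" and K: "Kobj C \<in> Mcls C" and EK: "prd C E (Kobj C) \<in> Mcls C"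
    by (simp_all add: E EEK_in_Mcls Kobj_in_Mcls prd_in_Mcls)
  have P: "openin (tp (EEK C E)) P" by (rule C0_openin[OF h EEK F])
  have "p \<in> carr (EEK C E)" using p C0_subset_carr[OF h EEK F] by blast
  then obtain x v t where p_eq: "p = pairing C x (pairing C v (emb C t))"
    and x: "x \<in> carr E" and v: "v \<in> carr E"
    by (auto simp: carr_EEK E)
  define line where "line s = pairing C x (pairing C v s)" for s
  have "line \<in> C0s C (Kobj C) (carr (Kobj C)) (EEK C E)"
    unfolding line_def EEK_def
    by (rule C0_compose[OF C0_pairing_right[OF E K v] C0_pairing_right[OF E EK x]])
      (auto simp: carr_prd E K EK EEK[unfolded EEK_def] v)
  moreover define V where "V = {s \<in> carr (Kobj C). line s \<in> P}"
  ultimately have V: "openin (tp (Kobj C)) V" and line: "line \<in> C0s C (Kobj C) V (EEK C E)"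
    using C0_openin_preimage[OF _ K EEK P] C0_restrict[OF _ K EEK] by auto
  have "(\<lambda>s. h (line s)) s = (\<lambda>s. g (line s)) s" if "s \<in> V" for s
  proof (rule C0_eq_if_eq_off_zero[OF F V _ _ _ that])
    show "(\<lambda>s. h (line s)) \<in> C0s C (Kobj C) V F"
      by (rule C0_compose[OF line h _ K EEK F]) (auto simp: V_def)
    show "(\<lambda>s. g (line s)) \<in> C0s C (Kobj C) V F"
      by (rule C0_compose[OF line g _ K EEK F]) (auto simp: V_def)
    show "h (line s) = g (line s)" if "s \<in> V" "kv C s \<noteq> 0" for s
      using that eq by (auto simp: V_def line_def carr_Kobj)
  qed
  moreover have "emb C t \<in> V" using p by (simp add: V_def line_def p_eq carr_Kobj)
  ultimately show ?thesis by (simp add: p_eq line_def)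
qed

lemma diffquot_map_glue:
  assumes E: "E \<in> Mcls C" and F: "F \<in> Mcls C" and U: "openin (tp E) U"
    and f: "f \<in> C0s C E U F"
    and P_U1: "P \<subseteq> U1 C E U"
    and P_zero: "\<And>x v. x \<in> U \<Longrightarrow> v \<in> carr E \<Longrightarrow> pairing C x (pairing C v (emb C 0)) \<in> P"
    and g: "g \<in> C0s C (EEK C E) P F"
    and g_eq: "\<And>x v t. pairing C x (pairing C v (emb C t)) \<in> P \<Longrightarrow> t \<noteq> 0 \<Longrightarrow>
      g (pairing C x (pairing C v (emb C t))) = sm F (inverse t) (msub F (f (ad E x (sm E t v))) (f x))"
  shows "diffquot_map C E U F f (\<lambda>p. if p \<in> P then g p else diff_quot C E F f p)"
proof -
  let ?h = "\<lambda>p. if p \<in> P then g p else diff_quot C E F f p"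
  let ?N = "{p \<in> U1 C E U. psnd C (psnd C p) \<noteq> emb C 0}"
  have EEK: "EEK C E \<in> Mcls C" by (rule EEK_in_Mcls[OF E])
  have h_nonzero: "?h p = diff_quot C E F f p" if "p \<in> ?N" for p
    using that g_eq by (auto simp: U1_def)
  have "?h \<in> C0s C (EEK C E) (P \<union> ?N) F"
  proof (rule C0_Un[OF EEK F])
    show "?h \<in> C0s C (EEK C E) P F" by (rule C0_cong[OF g EEK F]) simp
    show "?h \<in> C0s C (EEK C E) ?N F" by (rule C0_cong[OF C0_diff_quot[OF E F U f] EEK F h_nonzero])
  qed
  moreover have "P \<union> ?N = U1 C E U"
    using P_U1 P_zero by (auto simp: U1_def)
  ultimately have h: "?h \<in> C0s C (EEK C E) (U1 C E U) F" by simp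
  moreover have "msub F (f (ad E x (sm E t v))) (f x) = sm F t (?h (pairing C x (pairing C v (emb C t))))"
    if x: "x \<in> U" and v: "v \<in> carr E" and xtv: "ad E x (sm E t v) \<in> U" for x v t
  proof (cases "t = 0")
    case True
    have "x \<in> carr E" using x C0_subset_carr[OF f E F] by blast
    then have "ad E x (sm E t v) = x"
      using True v by (simp add: tmodule_sm_zero tmodule_ad_zer Mcls_tmodule E)
    moreover have "?h (pairing C x (pairing C v (emb C t))) \<in> carr F"
      by (rule C0_in_carr[OF h EEK F]) (use x v xtv in \<open>auto simp: U1_def\<close>)
    ultimately show ?thesis
      using True C0_in_carr[OF f E F x] by (simp add: tmodule_sm_zero tmodule_msub_self Mcls_tmodule F)
  next
    case False
    have "f (ad E x (sm E t v)) \<in> carr F" "f x \<in> carr F"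
      using C0_in_carr[OF f E F] x xtv by auto
    then show ?thesis using False h_nonzero[of "pairing C x (pairing C v (emb C t))"] x v xtv
      by (simp add: U1_def tmodule_sm_cancel_inverse tmodule_msub_in Mcls_tmodule F)
  qed
  ultimately show ?thesis unfolding diffquot_map_def by simp
qed

lemma diffquot_map_eq_on:
  assumes E: "E \<in> Mcls C" and F: "F \<in> Mcls C"
    and h: "diffquot_map C E U F f h"
    and P_U1: "P \<subseteq> U1 C E U" and P: "openin (tp (EEK C E)) P"
    and g: "g \<in> C0s C (EEK C E) P F"
    and g_eq: "\<And>x v t. pairing C x (pairing C v (emb C t)) \<in> P \<Longrightarrow> t \<noteq> 0 \<Longrightarrow>
      g (pairing C x (pairing C v (emb C t))) = sm F (inverse t) (msub F (f (ad E x (sm E t v))) (f x))"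
    and p: "p \<in> P"
  shows "h p = g p"
proof -
  have EEK: "EEK C E \<in> Mcls C" by (rule EEK_in_Mcls[OF E])
  have h_C0: "h \<in> C0s C (EEK C E) (U1 C E U) F"
    and h_eq: "\<And>x v t. x \<in> U \<Longrightarrow> v \<in> carr E \<Longrightarrow> ad E x (sm E t v) \<in> U \<Longrightarrow>
      msub F (f (ad E x (sm E t v))) (f x) = sm F t (h (pairing C x (pairing C v (emb C t))))"
    using h unfolding diffquot_map_def by auto
  show ?thesis
  proof (rule C0_EEK_eq_if_eq_off_zero[OF E F C0_restrict[OF h_C0 EEK F P P_U1] g _ p])
    fix x v t
    assume xvt: "pairing C x (pairing C v (emb C t)) \<in> P" and t: "t \<noteq> 0"
    then have x: "x \<in> U" and v: "v \<in> carr E" and xtv: "ad E x (sm E t v) \<in> U"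
      using P_U1 by (auto simp: U1_def)
    have "h (pairing C x (pairing C v (emb C t))) \<in> carr F"
      using C0_in_carr[OF h_C0 EEK F] xvt P_U1 by blast
    then show "h (pairing C x (pairing C v (emb C t))) = g (pairing C x (pairing C v (emb C t)))"
      by (simp add: g_eq[OF xvt t] h_eq[OF x v xtv] tmodule_sm_inverse_cancel Mcls_tmodule F t)
  qed
qed

end

theorem lemma2p6:
  fixes C :: "('k::field, 'u) concept"
  assumes "C0_concept C"
    and "E \<in> Mcls C" and "F \<in> Mcls C"
    and "openin (tp E) U"
    and "f \<in> C0s C E U F"
    and "P \<subseteq> U1 C E U"
    and "openin (subtopology (tp (EEK C E)) (U1 C E U)) P"
    and "{pairing C x (pairing C v (emb C 0)) | x v. x \<in> U \<and> v \<in> carr E} \<subseteq> P"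
    and "g \<in> C0s C (EEK C E) P F"
    and "\<forall>x v t. pairing C x (pairing C v (emb C t)) \<in> P \<longrightarrow> t \<noteq> 0 \<longrightarrow>
           g (pairing C x (pairing C v (emb C t)))
             = sm F (inverse t) (msub F (f (ad E x (sm E t v))) (f x))"
  shows "C1 C E U F f \<and> (\<forall>h. diffquot_map C E U F f h \<longrightarrow> (\<forall>p\<in>P. h p = g p))"
proof -
  interpret c0_concept C by (rule c0_concept.intro[OF assms(1)])
  have P_open: "openin (tp (EEK C E)) P"
    using openin_trans_full[OF assms(7) openin_U1[OF assms(2,4)]] .
  have "diffquot_map C E U F f (\<lambda>p. if p \<in> P then g p else diff_quot C E F f p)"
    by (rule diffquot_map_glue[OF assms(2-6) _ assms(9)]) (use assms(8,10) in blast)+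
  moreover have "h p = g p" if "diffquot_map C E U F f h" "p \<in> P" for h p
    by (rule diffquot_map_eq_on[OF assms(2,3) that(1) assms(6) P_open assms(9) _ that(2)])
      (use assms(10) in blast)
  ultimately show ?thesis unfolding C1_def using assms(5) by blast
qed

end
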